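(* In the setting below, with $M$ of constant sectional curvature $K$, a nearly-hypo natural SU(2)-structure on $\mathcal S$ with $\tilde\theta=-2\theta$, $\omega_1=d\theta$, $\omega_2=b_0\alpha_0+b_1\alpha_1+b_2\alpha_2$, $\omega_3=\frac{Kb_1}{3}\alpha_0+\frac{s^2Kb_2-b_0}{6s^2}\alpha_1-\frac{b_1}{3s^2}\alpha_2$ (where $b_1^2-b_0b_2=1$, $(b_0+s^2Kb_2)^2+4s^2K=36s^4$, $K>-b_0^2/(s^2(1+b_1^2))$) is Sasaki–Einstein if and only if $K=9s^2$ (in particular $K>0$). Consequently, among those compatible with the canonical metric, all structures with $b_2=-b_0$, $b_1\ne0$, $b_0^2+b_1^2=1$, $K=3=s^{-2}$ are Sasaki–Einstein, and those with $b_2=-b_0=\pm1$, $b_1=0$, $s^2K+1=6s^2$ are Sasaki–Einstein if and only if $K=3$ and $s^2=1/3$.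
   Context: Let $(M,g)$ be a connected oriented Riemannian 3-manifold, $s>0$, and $\mathcal S=\{u\in TM:\|u\|=s\}$ the total space of the radius-$s$ tangent sphere bundle with the canonical (Sasaki-induced) metric. An adapted frame at $u\in\mathcal S$: take a positively oriented orthonormal frame $(f_0=u/s,f_1,f_2)$ of $T_{\pi(u)}M$ and set $e_0=f_0^h,e_1=f_1^h,e_2=f_2^h,e_3=f_1^v,e_4=f_2^v$ (horizontal and vertical lifts); dual coframe $e^0,\dots,e^4$, $e^{ij}=e^i\wedge e^j$. Globally defined forms: $\theta=s\,e^0$, $\alpha_0=e^{12}$, $\alpha_1=e^{14}-e^{23}$, $\alpha_2=e^{34}$, $d\theta=e^{31}+e^{42}$. For constant sectional curvature $K$: $d\alpha_0=s^{-2}\theta\wedge\alpha_1$, $d\alpha_1=2s^{-2}\theta\wedge\alpha_2-2K\theta\wedge\alpha_0$, $d\alpha_2=-K\theta\wedge\alpha_1$. An SU(2)-structure: $(\tilde\theta,\omega_1,\omega_2,\omega_3)$ with (C1) $\tilde\theta\wedge\omega_1\wedge\omega_1\neq0$, $\omega_i\wedge\omega_j=0$ ($i\ne j$), $\omega_1\wedge\omega_1=\omega_2\wedge\omega_2=\omega_3\wedge\omega_3=2v$, $v$ nowhere zero; (C2) $x\lrcorner\omega_1=y\lrcorner\omega_2\Rightarrow\omega_3(x,y)\ge0$. Nearly-hypo: $d\omega_2=3\tilde\theta\wedge\omega_3$, $d(\tilde\theta\wedge\omega_1)=-2\omega_1\wedge\omega_1$. Sasaki–Einstein SU(2)-structure: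 $d\tilde\theta=-2\omega_1$, $d\omega_2=3\tilde\theta\wedge\omega_3$, $d\omega_3=-3\tilde\theta\wedge\omega_2$. Compatible with the canonical metric: the metric $g_{SU(2)}$ on $\ker\tilde\theta$ defined by $x\lrcorner\omega_1\wedge y\lrcorner\omega_2\wedge\omega_3=g_{SU(2)}(x,y)\,v$ equals the canonical metric on $\ker\theta$. *)

theory Defs
  imports Complex_Main
begin

text \<open>Algebraic model of the exterior algebra at a point of the 5-dimensional
  sphere bundle, written in an adapted coframe e^0,...,e^4 (indices 0..4).
  A form is a function assigning to each increasing multi-index (a subset of
  {0..4}) its coefficient: the form is the sum over I of f I times e^I.\<close>

type_synonym form = "nat set \<Rightarrow> real"

definition fzero :: form where "fzero = (\<lambda>S. 0)"
definition fadd :: "form \<Rightarrow> form \<Rightarrow> form" where "fadd a b = (\<lambda>S. a S + b S)"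
definition fscale :: "real \<Rightarrow> form \<Rightarrow> form" where "fscale c a = (\<lambda>S. c * a S)"

definition ebas :: "nat \<Rightarrow> form" where "ebas i = (\<lambda>S. if S = {i} then 1 else 0)"

definition inv_count :: "nat set \<Rightarrow> nat set \<Rightarrow> nat" where
  "inv_count I J = card {(i, j). i \<in> I \<and> j \<in> J \<and> j < i}"

definition wedge :: "form \<Rightarrow> form \<Rightarrow> form" where
  "wedge a b = (\<lambda>S. if S \<subseteq> {..<5}
      then (\<Sum>I\<in>Pow S. (-1) ^ inv_count I (S - I) * a I * b (S - I)) else 0)"

definition e2 :: "nat \<Rightarrow> nat \<Rightarrow> form" where "e2 i j = wedge (ebas i) (ebas j)"

text \<open>Tangent vectors are given by their components x 0, ..., x 4 in the
  adapted frame e_0, ..., e_4.\<close>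
definition eval1 :: "form \<Rightarrow> (nat \<Rightarrow> real) \<Rightarrow> real" where
  "eval1 \<phi> x = (\<Sum>i<5. x i * \<phi> {i})"

definition comp2 :: "form \<Rightarrow> nat \<Rightarrow> nat \<Rightarrow> real" where
  "comp2 \<omega> i j = (if i < j then \<omega> {i, j} else if j < i then - \<omega> {i, j} else 0)"

definition eval2 :: "form \<Rightarrow> (nat \<Rightarrow> real) \<Rightarrow> (nat \<Rightarrow> real) \<Rightarrow> real" where
  "eval2 \<omega> x y = (\<Sum>i<5. \<Sum>j<5. x i * y j * comp2 \<omega> i j)"

definition contr :: "(nat \<Rightarrow> real) \<Rightarrow> form \<Rightarrow> form" where
  "contr x \<omega> = (\<lambda>S. if (\<exists>j<5. S = {j})
       then (\<Sum>i<5. x i * comp2 \<omega> i (the_elem S)) else 0)"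

definition theta :: "real \<Rightarrow> form" where "theta s = fscale s (ebas 0)"
definition alpha0 :: form where "alpha0 = e2 1 2"
definition alpha1 :: form where "alpha1 = fadd (e2 1 4) (fscale (-1) (e2 2 3))"
definition alpha2 :: form where "alpha2 = e2 3 4"
definition dtheta :: form where "dtheta = fadd (e2 3 1) (e2 4 2)"

definition alpha_comb :: "real \<Rightarrow> real \<Rightarrow> real \<Rightarrow> form" where
  "alpha_comb c0 c1 c2 = fadd (fscale c0 alpha0) (fadd (fscale c1 alpha1) (fscale c2 alpha2))"

text \<open>Natural forms with constant coefficients: linear combinations of the
  generators theta, d theta, alpha_0, alpha_1, alpha_2, theta \<and> d theta.
  Their exterior derivatives (constant sectional curvature K) are given by the
  structure equations: d theta, d(d theta) = 0, the formulas for d alpha_i,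
  and d(theta \<and> d theta) = d theta \<and> d theta.\<close>
definition gen :: "real \<Rightarrow> nat \<Rightarrow> form" where
  "gen s k = (if k = 0 then theta s else if k = 1 then dtheta
     else if k = 2 then alpha0 else if k = 3 then alpha1 else if k = 4 then alpha2
     else wedge (theta s) dtheta)"

definition dgen :: "real \<Rightarrow> real \<Rightarrow> nat \<Rightarrow> form" where
  "dgen K s k = (if k = 0 then dtheta else if k = 1 then fzero
     else if k = 2 then fscale (1 / s\<^sup>2) (wedge (theta s) alpha1)
     else if k = 3 then fadd (fscale (2 / s\<^sup>2) (wedge (theta s) alpha2))
                              (fscale (- 2 * K) (wedge (theta s) alpha0))
     else if k = 4 then fscale (- K) (wedge (theta s) alpha1)
     else wedge dtheta dtheta)"

definition lincomb :: "(nat \<Rightarrow> real) \<Rightarrow> (nat \<Rightarrow> form) \<Rightarrow> form" where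
  "lincomb c F = (\<lambda>S. \<Sum>k<6. c k * F k S)"

definition dnat :: "real \<Rightarrow> real \<Rightarrow> form \<Rightarrow> form" where
  "dnat K s \<omega> = (if (\<exists>c. \<omega> = lincomb c (gen s))
      then lincomb (SOME c. \<omega> = lincomb c (gen s)) (dgen K s) else fzero)"

definition su2_structure :: "form \<Rightarrow> form \<Rightarrow> form \<Rightarrow> form \<Rightarrow> bool" where
  "su2_structure \<theta>t \<omega>1 \<omega>2 \<omega>3 \<longleftrightarrow>
     wedge \<theta>t (wedge \<omega>1 \<omega>1) \<noteq> fzero \<and>
     wedge \<omega>1 \<omega>2 = fzero \<and> wedge \<omega>1 \<omega>3 = fzero \<and> wedge \<omega>2 \<omega>3 = fzero \<and>
     wedge \<omega>1 \<omega>1 = wedge \<omega>2 \<omega>2 \<and> wedge \<omega>2 \<omega>2 = wedge \<omega>3 \<omega>3 \<and>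
     wedge \<omega>1 \<omega>1 \<noteq> fzero \<and>
     (\<forall>x y. contr x \<omega>1 = contr y \<omega>2 \<longrightarrow> eval2 \<omega>3 x y \<ge> 0)"

definition nearly_hypo :: "real \<Rightarrow> real \<Rightarrow> form \<Rightarrow> form \<Rightarrow> form \<Rightarrow> form \<Rightarrow> bool" where
  "nearly_hypo K s \<theta>t \<omega>1 \<omega>2 \<omega>3 \<longleftrightarrow>
     dnat K s \<omega>2 = fscale 3 (wedge \<theta>t \<omega>3) \<and>
     dnat K s (wedge \<theta>t \<omega>1) = fscale (-2) (wedge \<omega>1 \<omega>1)"

definition sasaki_einstein :: "real \<Rightarrow> real \<Rightarrow> form \<Rightarrow> form \<Rightarrow> form \<Rightarrow> form \<Rightarrow> bool" where
  "sasaki_einstein K s \<theta>t \<omega>1 \<omega>2 \<omega>3 \<longleftrightarrow>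
     dnat K s \<theta>t = fscale (-2) \<omega>1 \<and>
     dnat K s \<omega>2 = fscale 3 (wedge \<theta>t \<omega>3) \<and>
     dnat K s \<omega>3 = fscale (-3) (wedge \<theta>t \<omega>2)"

text \<open>Compatibility with the canonical metric: the adapted frame e_0..e_4 is
  orthonormal for the canonical metric, so on ker theta it is the standard
  inner product of components; v is defined by \<omega>1 \<and> \<omega>1 = 2 v.\<close>
definition compatible :: "form \<Rightarrow> form \<Rightarrow> form \<Rightarrow> form \<Rightarrow> bool" where
  "compatible \<theta>t \<omega>1 \<omega>2 \<omega>3 \<longleftrightarrow>
     (\<forall>x y. eval1 \<theta>t x = 0 \<and> eval1 \<theta>t y = 0 \<longrightarrow>
        wedge (wedge (contr x \<omega>1) (contr y \<omega>2)) \<omega>3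
          = fscale (\<Sum>i<5. x i * y i) (fscale (1/2) (wedge \<omega>1 \<omega>1)))"

definition thetaT :: "real \<Rightarrow> form" where "thetaT s = fscale (-2) (theta s)"
definition omega2 :: "real \<Rightarrow> real \<Rightarrow> real \<Rightarrow> form" where
  "omega2 b0 b1 b2 = alpha_comb b0 b1 b2"
definition omega3 :: "real \<Rightarrow> real \<Rightarrow> real \<Rightarrow> real \<Rightarrow> real \<Rightarrow> form" where
  "omega3 K s b0 b1 b2 = alpha_comb (K * b1 / 3) ((s\<^sup>2 * K * b2 - b0) / (6 * s\<^sup>2)) (- b1 / (3 * s\<^sup>2))"

definition family_hyps :: "real \<Rightarrow> real \<Rightarrow> real \<Rightarrow> real \<Rightarrow> real \<Rightarrow> bool" where
  "family_hyps K s b0 b1 b2 \<longleftrightarrow>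
     b1\<^sup>2 - b0 * b2 = 1 \<and> (b0 + s\<^sup>2 * K * b2)\<^sup>2 + 4 * s\<^sup>2 * K = 36 * s ^ 4 \<and>
     K > - b0\<^sup>2 / (s\<^sup>2 * (1 + b1\<^sup>2)) \<and>
     su2_structure (thetaT s) dtheta (omega2 b0 b1 b2) (omega3 K s b0 b1 b2) \<and>
     nearly_hypo K s (thetaT s) dtheta (omega2 b0 b1 b2) (omega3 K s b0 b1 b2)"

end

theory Submission
  imports Defs
begin

text \<open>All forms involved are natural with constant coefficients, so d is computed by the
  structure equations. Both d omega_2 and d omega_3 are combinations of theta \<and> alpha_0,
  theta \<and> alpha_1, theta \<and> alpha_2, which are linearly independent; comparing coefficients,
  d omega_2 = 3 thetaT \<and> omega_3 holds identically (as does d thetaT = -2 d theta), and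
  d omega_3 = -3 thetaT \<and> omega_2 amounts
  to three polynomial equations in K, s, b_i. Under b_1^2 - b_0 b_2 = 1 and
  (b_0 + s^2 K b_2)^2 + 4 s^2 K = 36 s^4 these are equivalent to K = 9 s^2: if b_1 = 0 then
  b_2 \<noteq> 0 and the equations force it, and conversely K = 9 s^2 turns the second constraint into
  (b_0 + 9 s^4 b_2)^2 = 0.\<close>

lemma inv_count_singleton_0: "inv_count {0} X = 0"
proof -
  have "{(a, b). a \<in> {0::nat} \<and> b \<in> X \<and> b < a} = {}" by auto
  then show ?thesis unfolding inv_count_def by (simp only: card.empty)
qed

lemma inv_count_singletons: "inv_count {i} {j} = (if j < i then 1 else 0)"
proof -
  have "{(a, b). a \<in> {i} \<and> b \<in> {j} \<and> b < a} = (if j < i then {(i, j)} else {})" by auto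
  then show ?thesis unfolding inv_count_def by (simp only: card.empty card.insert) simp
qed

lemma wedge_theta_apply:
  "wedge (theta s) b S = (if S \<subseteq> {..<5} \<and> 0 \<in> S then s * b (S - {0}) else 0)"
proof (cases "S \<subseteq> {..<5}")
  case True
  then have "finite (Pow S)" using finite_subset by blast
  moreover have "(\<Sum>I\<in>Pow S. (-1) ^ inv_count I (S - I) * theta s I * b (S - I))
      = (\<Sum>I\<in>Pow S. if I = {0} then s * b (S - {0}) else 0)"
    by (rule sum.cong) (auto simp: theta_def fscale_def ebas_def inv_count_singleton_0)
  ultimately show ?thesis using True unfolding wedge_def by simp
qed (simp add: wedge_def)

lemma e2_apply:
  "e2 i j T = (if T = {i, j} \<and> i < 5 \<and> j < 5 \<and> i \<noteq> j then (if j < i then -1 else 1) else 0)"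
proof (cases "T \<subseteq> {..<5}")
  case True
  then have fin: "finite (Pow T)" using finite_subset by blast
  have "(\<Sum>I\<in>Pow T. (-1) ^ inv_count I (T - I) * ebas i I * ebas j (T - I))
      = (\<Sum>I\<in>Pow T. if I = {i} then (-1) ^ inv_count {i} (T - {i}) * ebas j (T - {i}) else 0)"
    by (rule sum.cong) (auto simp: ebas_def)
  also have "\<dots> = (if i \<in> T then (-1) ^ inv_count {i} (T - {i}) * ebas j (T - {i}) else 0)"
    using fin by (simp add: sum.delta)
  also have "\<dots> = (if T = {i, j} \<and> i < 5 \<and> j < 5 \<and> i \<noteq> j then (if j < i then -1 else 1) else 0)"
  proof (cases "i \<in> T \<and> T - {i} = {j}")
    case c: True
    then have "T = {i, j}" "i \<noteq> j" by auto
    then show ?thesis using c True by (auto simp: ebas_def inv_count_singletons)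
  qed (auto simp: ebas_def)
  finally show ?thesis using True unfolding wedge_def e2_def by simp
qed (auto simp: wedge_def e2_def)

lemma insert2_ne_doubleton:
  assumes "a \<noteq> b" "a \<noteq> c" "b \<noteq> c"
  shows "{a, b, c} \<noteq> {d, e}"
proof
  assume "{a, b, c} = {d, e}"
  then have "card {a, b, c} \<le> 2" by (simp add: card_insert_le_m1)
  with assms show False by simp
qed

lemma theta_apply: "theta s S = (if S = {0} then s else 0)"
  by (simp add: theta_def fscale_def ebas_def)

lemmas form_apply_simps = insert2_ne_doubleton gen_def fscale_def ebas_def e2_apply
  alpha0_def alpha1_def alpha2_def fadd_def dtheta_def wedge_theta_apply doubleton_eq_iff
  fzero_def theta_apply

lemma lincomb_expand:
  "lincomb c F S = c 0 * F 0 S + c 1 * F 1 S + c 2 * F 2 S + c 3 * F 3 S + c 4 * F 4 S + c 5 * F 5 S"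
  unfolding lincomb_def by (simp add: eval_nat_numeral)

lemma lincomb_gen_inj:
  assumes "s \<noteq> 0" "lincomb a (gen s) = lincomb b (gen s)"
  shows "\<forall>k<6. a k = b k"
proof -
  have coeff: "\<And>S. lincomb a (gen s) S = lincomb b (gen s) S" using assms(2) by simp
  have "a 0 = b 0" using coeff[of "{0}"] assms(1) by (simp add: lincomb_expand form_apply_simps)
  moreover have "a 1 = b 1" using coeff[of "{1, 3}"] by (simp add: lincomb_expand form_apply_simps)
  moreover have "a 2 = b 2" using coeff[of "{1, 2}"] by (simp add: lincomb_expand form_apply_simps)
  moreover have "a 3 = b 3" using coeff[of "{1, 4}"] by (simp add: lincomb_expand form_apply_simps)
  moreover have "a 4 = b 4" using coeff[of "{3, 4}"] by (simp add: lincomb_expand form_apply_simps)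
  moreover have "a 5 = b 5"
    using coeff[of "{0, 1, 3}"] assms(1) by (simp add: lincomb_expand form_apply_simps insert_Diff_if)
  ultimately show ?thesis by (auto simp: less_Suc_eq eval_nat_numeral)
qed

text \<open>By independence, the coefficients chosen by SOME in dnat are the given ones.\<close>
lemma dnat_lincomb_gen:
  assumes "s \<noteq> 0"
  shows "dnat K s (lincomb c (gen s)) = lincomb c (dgen K s)"
proof -
  let ?c = "SOME c'. lincomb c (gen s) = lincomb c' (gen s)"
  have "lincomb c (gen s) = lincomb ?c (gen s)" by (rule someI[of _ c]) simp
  then have "\<forall>k<6. c k = ?c k" using lincomb_gen_inj assms by blast
  then have "lincomb ?c (dgen K s) = lincomb c (dgen K s)" unfolding lincomb_def by auto
  then show ?thesis unfolding dnat_def by auto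
qed

lemma wedge_fscale_left: "wedge (fscale c x) y = fscale c (wedge x y)"
  unfolding wedge_def fscale_def by (auto simp: sum_distrib_left algebra_simps)

lemma wedge_fscale_right: "wedge x (fscale c y) = fscale c (wedge x y)"
  unfolding wedge_def fscale_def by (auto simp: sum_distrib_left algebra_simps)

lemma wedge_fadd_right: "wedge x (fadd y z) = fadd (wedge x y) (wedge x z)"
  unfolding wedge_def fadd_def by (auto simp: sum.distrib algebra_simps)

lemma wedge_alpha_comb:
  "wedge x (alpha_comb c0 c1 c2) =
     fadd (fscale c0 (wedge x alpha0)) (fadd (fscale c1 (wedge x alpha1)) (fscale c2 (wedge x alpha2)))"
  unfolding alpha_comb_def by (simp only: wedge_fadd_right wedge_fscale_right)

lemma dnat_thetaT:
  assumes "s \<noteq> 0"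
  shows "dnat K s (thetaT s) = fscale (-2) dtheta"
proof -
  have "thetaT s = lincomb (\<lambda>k. if k = 0 then -2 else 0) (gen s)"
    by (rule ext) (simp add: lincomb_expand thetaT_def gen_def fscale_def)
  then show ?thesis
    by (simp add: dnat_lincomb_gen[OF assms]) (rule ext, simp add: lincomb_expand dgen_def fscale_def)
qed

lemma dnat_alpha_comb:
  assumes "s \<noteq> 0"
  shows "dnat K s (alpha_comb c0 c1 c2) =
    wedge (theta s) (alpha_comb (- 2 * K * c1) (c0 / s\<^sup>2 - K * c2) (2 * c1 / s\<^sup>2))"
proof -
  have "alpha_comb c0 c1 c2 =
      lincomb (\<lambda>k. if k = 2 then c0 else if k = 3 then c1 else if k = 4 then c2 else 0) (gen s)"
    by (rule ext) (simp add: lincomb_expand alpha_comb_def gen_def fscale_def fadd_def)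
  then show ?thesis
    by (simp add: dnat_lincomb_gen[OF assms] wedge_alpha_comb)
      (rule ext, simp add: lincomb_expand dgen_def fscale_def fadd_def wedge_fscale_right algebra_simps)
qed

lemma fscale_wedge_thetaT_alpha_comb:
  "fscale c (wedge (thetaT s) (alpha_comb c0 c1 c2)) =
     wedge (theta s) (alpha_comb (- 2 * c * c0) (- 2 * c * c1) (- 2 * c * c2))"
  unfolding thetaT_def wedge_fscale_left wedge_alpha_comb
  by (rule ext) (simp add: fscale_def fadd_def algebra_simps)

lemma wedge_theta_alpha_comb_eq_iff:
  assumes "s \<noteq> 0"
  shows "wedge (theta s) (alpha_comb a0 a1 a2) = wedge (theta s) (alpha_comb c0 c1 c2)
    \<longleftrightarrow> a0 = c0 \<and> a1 = c1 \<and> a2 = c2"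
proof
  assume eq: "wedge (theta s) (alpha_comb a0 a1 a2) = wedge (theta s) (alpha_comb c0 c1 c2)"
  have "\<And>S. wedge (theta s) (alpha_comb a0 a1 a2) S = wedge (theta s) (alpha_comb c0 c1 c2) S"
    using eq by simp
  from this[of "{0, 1, 2}"] this[of "{0, 1, 4}"] this[of "{0, 3, 4}"] assms
  show "a0 = c0 \<and> a1 = c1 \<and> a2 = c2"
    by (simp add: alpha_comb_def form_apply_simps insert_Diff_if)
qed simp

lemma dnat_omega2:
  assumes "s \<noteq> 0"
  shows "dnat K s (omega2 b0 b1 b2) = fscale 3 (wedge (thetaT s) (omega3 K s b0 b1 b2))"
  using assms
  unfolding omega2_def omega3_def dnat_alpha_comb[OF assms] fscale_wedge_thetaT_alpha_comb
    wedge_theta_alpha_comb_eq_iff[OF assms]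
  by (simp add: field_simps power2_eq_square)

lemma dnat_omega3_eq_iff:
  assumes "s \<noteq> 0"
  shows "dnat K s (omega3 K s b0 b1 b2) = fscale (-3) (wedge (thetaT s) (omega2 b0 b1 b2))
    \<longleftrightarrow> K * (s\<^sup>2 * K * b2 - b0) = - 18 * s\<^sup>2 * b0 \<and> b1 * (K - 9 * s\<^sup>2) = 0
        \<and> s\<^sup>2 * K * b2 - b0 = 18 * s ^ 4 * b2"
proof -
  have s2: "s\<^sup>2 \<noteq> 0" using assms by simp
  have "- 2 * K * ((s\<^sup>2 * K * b2 - b0) / (6 * s\<^sup>2)) = 6 * b0
      \<longleftrightarrow> K * (s\<^sup>2 * K * b2 - b0) = - 18 * s\<^sup>2 * b0"
    using s2 by (simp add: field_simps) argo
  moreover have "K * b1 / 3 / s\<^sup>2 - K * (- b1 / (3 * s\<^sup>2)) = 6 * b1 \<longleftrightarrow> b1 * (K - 9 * s\<^sup>2) = 0"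
    using s2 by (simp add: field_simps)
  moreover have "2 * ((s\<^sup>2 * K * b2 - b0) / (6 * s\<^sup>2)) / s\<^sup>2 = 6 * b2
      \<longleftrightarrow> s\<^sup>2 * K * b2 - b0 = 18 * s ^ 4 * b2"
    using s2 by (simp add: field_simps power2_eq_square power4_eq_xxxx) argo
  ultimately show ?thesis
    unfolding omega2_def omega3_def dnat_alpha_comb[OF assms] fscale_wedge_thetaT_alpha_comb
      wedge_theta_alpha_comb_eq_iff[OF assms]
    by simp
qed

lemma coefficient_equations_iff:
  fixes s K b0 b1 b2 :: real
  assumes "s \<noteq> 0" and unimodular: "b1\<^sup>2 - b0 * b2 = 1"
    and normalization: "(b0 + s\<^sup>2 * K * b2)\<^sup>2 + 4 * s\<^sup>2 * K = 36 * s ^ 4"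
  shows "K * (s\<^sup>2 * K * b2 - b0) = - 18 * s\<^sup>2 * b0 \<and> b1 * (K - 9 * s\<^sup>2) = 0
      \<and> s\<^sup>2 * K * b2 - b0 = 18 * s ^ 4 * b2
    \<longleftrightarrow> K = 9 * s\<^sup>2"
proof
  assume K: "K = 9 * s\<^sup>2"
  have "(b0 + 9 * s ^ 4 * b2)\<^sup>2 = 0"
    using normalization unfolding K by (simp add: algebra_simps power2_eq_square power4_eq_xxxx)
  then have "b0 = - 9 * s ^ 4 * b2" by simp
  then show "K * (s\<^sup>2 * K * b2 - b0) = - 18 * s\<^sup>2 * b0 \<and> b1 * (K - 9 * s\<^sup>2) = 0
      \<and> s\<^sup>2 * K * b2 - b0 = 18 * s ^ 4 * b2"
    unfolding K by (simp add: algebra_simps power2_eq_square power4_eq_xxxx)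
next
  assume eqs: "K * (s\<^sup>2 * K * b2 - b0) = - 18 * s\<^sup>2 * b0 \<and> b1 * (K - 9 * s\<^sup>2) = 0
      \<and> s\<^sup>2 * K * b2 - b0 = 18 * s ^ 4 * b2"
  show "K = 9 * s\<^sup>2"
  proof (cases "b1 = 0")
    case True
    then have b2: "b2 \<noteq> 0" using unimodular by auto
    have eq3: "s\<^sup>2 * K * b2 - b0 = 18 * s ^ 4 * b2" using eqs by blast
    have "K * (s\<^sup>2 * K * b2 - b0) = - 18 * s\<^sup>2 * b0" using eqs by blast
    then have "K * (18 * s ^ 4 * b2) = - 18 * s\<^sup>2 * b0" unfolding eq3 .
    then have "s\<^sup>2 * (K * s\<^sup>2 * b2 + b0) = 0"
      by (simp add: algebra_simps power2_eq_square power4_eq_xxxx)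
    then have "b0 = - K * s\<^sup>2 * b2" using assms(1) by simp
    then have "(s\<^sup>2 * b2) * (2 * K - 18 * s\<^sup>2) = 0"
      using eq3 by (simp add: algebra_simps power2_eq_square power4_eq_xxxx)
    then show ?thesis using assms(1) b2 by simp
  qed (use eqs in simp)
qed

lemma sasaki_einstein_iff:
  assumes "s \<noteq> 0" and "family_hyps K s b0 b1 b2"
  shows "sasaki_einstein K s (thetaT s) dtheta (omega2 b0 b1 b2) (omega3 K s b0 b1 b2)
    \<longleftrightarrow> K = 9 * s\<^sup>2"
proof -
  have "b1\<^sup>2 - b0 * b2 = 1" "(b0 + s\<^sup>2 * K * b2)\<^sup>2 + 4 * s\<^sup>2 * K = 36 * s ^ 4"
    using assms(2) unfolding family_hyps_def by auto
  from coefficient_equations_iff[OF assms(1) this] show ?thesis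
    unfolding sasaki_einstein_def dnat_thetaT[OF assms(1)] dnat_omega2[OF assms(1)]
      dnat_omega3_eq_iff[OF assms(1)]
    by simp
qed

lemma K_eq_9s2_iff_of_linear_relation:
  fixes s K :: real
  assumes "s\<^sup>2 * K + 1 = 6 * s\<^sup>2"
  shows "K = 9 * s\<^sup>2 \<longleftrightarrow> K = 3 \<and> s\<^sup>2 = 1 / 3"
proof
  assume K: "K = 9 * s\<^sup>2"
  then have "(3 * s\<^sup>2 - 1)\<^sup>2 = 0" using assms by (simp add: algebra_simps power2_eq_square)
  with K show "K = 3 \<and> s\<^sup>2 = 1 / 3" by simp
qed simp

theorem mainTheorem9:
  fixes s K b0 b1 b2 :: real
  assumes "s > 0"
  shows "(family_hyps K s b0 b1 b2 \<longrightarrow>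
           ((sasaki_einstein K s (thetaT s) dtheta (omega2 b0 b1 b2) (omega3 K s b0 b1 b2)
              \<longleftrightarrow> K = 9 * s\<^sup>2) \<and>
            (sasaki_einstein K s (thetaT s) dtheta (omega2 b0 b1 b2) (omega3 K s b0 b1 b2)
              \<longrightarrow> K > 0)))
       \<and> (family_hyps K s b0 b1 b2 \<and>
          compatible (thetaT s) dtheta (omega2 b0 b1 b2) (omega3 K s b0 b1 b2) \<and>
          b2 = - b0 \<and> b1 \<noteq> 0 \<and> b0\<^sup>2 + b1\<^sup>2 = 1 \<and> K = 3 \<and> 1 / s\<^sup>2 = 3
          \<longrightarrow> sasaki_einstein K s (thetaT s) dtheta (omega2 b0 b1 b2) (omega3 K s b0 b1 b2))
       \<and> (family_hyps K s b0 b1 b2 \<and>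
          compatible (thetaT s) dtheta (omega2 b0 b1 b2) (omega3 K s b0 b1 b2) \<and>
          b2 = - b0 \<and> (b0 = 1 \<or> b0 = -1) \<and> b1 = 0 \<and> s\<^sup>2 * K + 1 = 6 * s\<^sup>2
          \<longrightarrow> (sasaki_einstein K s (thetaT s) dtheta (omega2 b0 b1 b2) (omega3 K s b0 b1 b2)
               \<longleftrightarrow> K = 3 \<and> s\<^sup>2 = 1 / 3))"
proof -
  have s: "s \<noteq> 0" using assms by simp
  have "s\<^sup>2 = 1 / 3" if "1 / s\<^sup>2 = 3" using that s by (simp add: field_simps)
  then show ?thesis
    using sasaki_einstein_iff[OF s] K_eq_9s2_iff_of_linear_relation[of s K] assms
    by auto
qed

end
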